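(* Let $G$ and $H$ be graphs, each with at least two vertices. (1) If $n_1,n_2\ge1$ and $r_1,r_2\in(0,1)$ with $r_1^2+r_2^2=1$ are such that $G$ admits a spherical embedding of dimension $n_1$ and radius $r_1$ and $H$ admits a spherical embedding of dimension $n_2$ and radius $r_2$, then $G+H$ has a unit-distance embedding in $\mathbb{R}^{n_1+n_2}$. (2) Conversely, if $G+H$ has a unit-distance embedding in $\mathbb{R}^n$, then there exist $n_1,n_2\ge1$ with $n_1+n_2=n$ and $r_1,r_2\in(0,1)$ with $r_1^2+r_2^2=1$ such that $G$ admits a spherical embedding of dimension $n_1$ and radius $r_1$ and $H$ admits a spherical embedding of dimension $n_2$ and radius $r_2$.
   Context: All graphs are finite and simple. A unit-distance embedding of a graph $G$ in $\mathbb{R}^n$ is an injective map $f$ from the vertex set of $G$ to $\mathbb{R}^n$ such that $|f(u)-f(v)|=1$ for every edge $uv$ and no point $f(w)$ lies on the segment $[f(u),f(v)]$ for an edge $uv$ with $w\notin\{u,v\}$ (edges may cross one another). $G$ admits a spherical embedding of dimension $k$ and radius $r$ if $G$ has a unit-distance embedding in $\mathbb{R}^k$ all of whose vertices lie on a sphere $\{x\in\mathbb{R}^k:|x-c|=r\}$. The sum $G+H$ is obtained from disjoint copies of $G$ and $H$ by adding all edges between a vertex of $G$ and a vertex of $H$. *)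

theory Defs
  imports Complex_Main
begin

definition simple_graph :: "'v set \<Rightarrow> ('v \<Rightarrow> 'v \<Rightarrow> bool) \<Rightarrow> bool" where
  "simple_graph V E \<longleftrightarrow> finite V \<and>
     (\<forall>u v. E u v \<longrightarrow> u \<in> V \<and> v \<in> V \<and> u \<noteq> v \<and> E v u)"

text \<open>Points of R^n are represented as functions nat => real vanishing at
all coordinates i >= n.\<close>
definition Rn :: "nat \<Rightarrow> (nat \<Rightarrow> real) set" where
  "Rn n = {x. \<forall>i\<ge>n. x i = 0}"

definition edist :: "nat \<Rightarrow> (nat \<Rightarrow> real) \<Rightarrow> (nat \<Rightarrow> real) \<Rightarrow> real" where
  "edist n x y = sqrt (\<Sum>i<n. (x i - y i)^2)"

definition seg :: "(nat \<Rightarrow> real) \<Rightarrow> (nat \<Rightarrow> real) \<Rightarrow> (nat \<Rightarrow> real) set" where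
  "seg a b = {x. \<exists>t::real. 0 \<le> t \<and> t \<le> 1 \<and> x = (\<lambda>i. (1 - t) * a i + t * b i)}"

definition unit_distance_embedding ::
  "nat \<Rightarrow> 'v set \<Rightarrow> ('v \<Rightarrow> 'v \<Rightarrow> bool) \<Rightarrow> ('v \<Rightarrow> nat \<Rightarrow> real) \<Rightarrow> bool" where
  "unit_distance_embedding n V E f \<longleftrightarrow>
     (\<forall>v\<in>V. f v \<in> Rn n) \<and> inj_on f V \<and>
     (\<forall>u v. E u v \<longrightarrow> edist n (f u) (f v) = 1) \<and>
     (\<forall>u v w. E u v \<and> w \<in> V \<and> w \<noteq> u \<and> w \<noteq> v \<longrightarrow> f w \<notin> seg (f u) (f v))"

definition spherical_embedding ::
  "nat \<Rightarrow> real \<Rightarrow> 'v set \<Rightarrow> ('v \<Rightarrow> 'v \<Rightarrow> bool) \<Rightarrow> bool" where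
  "spherical_embedding k r V E \<longleftrightarrow>
     (\<exists>f c. unit_distance_embedding k V E f \<and> c \<in> Rn k \<and>
            (\<forall>v\<in>V. edist k (f v) c = r))"

text \<open>The sum (join) G + H on the disjoint union 'a + 'b.\<close>
definition gsum_V :: "'a set \<Rightarrow> 'b set \<Rightarrow> ('a + 'b) set" where
  "gsum_V VG VH = Inl ` VG \<union> Inr ` VH"

fun gsum_E :: "'a set \<Rightarrow> 'b set \<Rightarrow> ('a \<Rightarrow> 'a \<Rightarrow> bool) \<Rightarrow> ('b \<Rightarrow> 'b \<Rightarrow> bool)
    \<Rightarrow> 'a + 'b \<Rightarrow> 'a + 'b \<Rightarrow> bool" where
  "gsum_E VG VH EG EH (Inl a) (Inl b) = EG a b"
| "gsum_E VG VH EG EH (Inr a) (Inr b) = EH a b"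
| "gsum_E VG VH EG EH (Inl a) (Inr b) = (a \<in> VG \<and> b \<in> VH)"
| "gsum_E VG VH EG EH (Inr b) (Inl a) = (a \<in> VG \<and> b \<in> VH)"

end

theory Submission
  imports Defs
begin

text \<open>Placing spheres of radii \<open>r1\<close> and \<open>r2\<close>, both centred at the origin, in complementary
  coordinate blocks of \<open>\<real>^(n1 + n2)\<close> puts every point of the first sphere at distance
  \<open>sqrt (r1\<^sup>2 + r2\<^sup>2) = 1\<close> from every point of the second; this gives a unit-distance
  embedding of \<open>G + H\<close>.

  Conversely, take a unit-distance embedding of \<open>G + H\<close>, vertices \<open>x\<^sub>0\<close> of \<open>G\<close> and
  \<open>y\<^sub>0\<close> of \<open>H\<close>. Polarising the four unit distances between \<open>x, x\<^sub>0\<close> and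
  \<open>y, y\<^sub>0\<close> shows that every difference \<open>x - x\<^sub>0\<close> is orthogonal to every difference
  \<open>y - y\<^sub>0\<close>. Gram--Schmidt yields an orthonormal basis \<open>bs\<close> of the span \<open>W\<close> of the
  \<open>H\<close>-differences, completed by \<open>cs\<close> to cover the \<open>G\<close>-differences and \<open>x\<^sub>0 - y\<^sub>0\<close>.
  The \<open>cs\<close>-coordinates embed \<open>G\<close> isometrically in \<open>\<real>^(n - dim W)\<close>, the
  \<open>bs\<close>-coordinates embed \<open>H\<close> in \<open>\<real>^(dim W)\<close>, and by Pythagoras each cross distance
  \<open>1\<close> splits as a square depending only on the \<open>G\<close>-vertex plus one depending only on
  the \<open>H\<close>-vertex, so both images lie on spheres whose squared radii sum to \<open>1\<close>.\<close>

section \<open>Orthonormal lists in \<open>\<real>^n\<close>\<close>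

definition dot :: "nat \<Rightarrow> (nat \<Rightarrow> real) \<Rightarrow> (nat \<Rightarrow> real) \<Rightarrow> real" where
  "dot n x y = (\<Sum>i<n. x i * y i)"

lemma dot_commute: "dot n x y = dot n y x"
  unfolding dot_def by (simp add: mult.commute)

lemma dot_cong: "(\<And>i. i < n \<Longrightarrow> p i = p' i) \<Longrightarrow> dot n p w = dot n p' w"
  unfolding dot_def by (rule sum.cong) auto

lemma dot_lincomb: "dot n (\<lambda>i. a * p i + b * q i) w = a * dot n p w + b * dot n q w"
  unfolding dot_def by (simp add: sum.distrib sum_distrib_left distrib_right mult.assoc)

lemma dot_scale: "dot n (\<lambda>i. a * p i) w = a * dot n p w"
  unfolding dot_def by (simp add: sum_distrib_left algebra_simps)

lemma dot_diff: "dot n (\<lambda>i. p i - q i) w = dot n p w - dot n q w"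
  unfolding dot_def by (simp add: sum_subtractf algebra_simps)

lemma dot_sum: "dot n (\<lambda>i. \<Sum>j<L. c j * B j i) w = (\<Sum>j<L. c j * dot n (B j) w)"
  unfolding dot_def sum_distrib_left sum_distrib_right
  by (subst sum.swap) (simp add: mult.assoc)

lemma dot_self_nonneg: "dot n x x \<ge> 0"
  unfolding dot_def by (simp add: sum_nonneg)

lemma dot_self_eq_0: "dot n x x = 0 \<Longrightarrow> i < n \<Longrightarrow> x i = 0"
  unfolding dot_def by (subst (asm) sum_nonneg_eq_0_iff) auto

lemma sum_lessThan_add: "(\<Sum>j<a + b. f j) = (\<Sum>j<a. f j) + (\<Sum>j<b. f (a + j) :: real)" for b :: nat
  by (induction b) (auto simp: add.assoc)

definition orthonormal :: "nat \<Rightarrow> (nat \<Rightarrow> real) list \<Rightarrow> bool" where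
  "orthonormal n bs \<longleftrightarrow>
     (\<forall>j<length bs. \<forall>k<length bs. dot n (bs!j) (bs!k) = (if j = k then 1 else 0))"

text \<open>For an orthonormal list \<open>bs\<close>, \<open>in_span n bs v\<close> says that \<open>v\<close> lies in the span
  of \<open>bs\<close>: it equals its Fourier expansion.\<close>
definition in_span :: "nat \<Rightarrow> (nat \<Rightarrow> real) list \<Rightarrow> (nat \<Rightarrow> real) \<Rightarrow> bool" where
  "in_span n bs v \<longleftrightarrow> (\<forall>i<n. v i = (\<Sum>j<length bs. dot n v (bs!j) * (bs!j) i))"

definition orthogonal_to :: "nat \<Rightarrow> (nat \<Rightarrow> real) list \<Rightarrow> (nat \<Rightarrow> real) \<Rightarrow> bool" where
  "orthogonal_to n bs z \<longleftrightarrow> (\<forall>j<length bs. dot n z (bs!j) = 0)"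

definition residual :: "nat \<Rightarrow> (nat \<Rightarrow> real) list \<Rightarrow> (nat \<Rightarrow> real) \<Rightarrow> nat \<Rightarrow> real" where
  "residual n bs v = (\<lambda>i. v i - (\<Sum>j<length bs. dot n v (bs!j) * (bs!j) i))"

lemma in_span_iff_residual: "in_span n bs v \<longleftrightarrow> (\<forall>i<n. residual n bs v i = 0)"
  unfolding in_span_def residual_def by simp

lemma dot_residual:
  "dot n (residual n bs v) w = dot n v w - (\<Sum>j<length bs. dot n v (bs!j) * dot n (bs!j) w)"
  unfolding residual_def by (simp add: dot_diff dot_sum)

lemma orthogonal_to_residual:
  assumes "orthonormal n bs"
  shows "orthogonal_to n bs (residual n bs v)"
  unfolding orthogonal_to_def
proof (intro allI impI)
  fix k assume k: "k < length bs"
  have "(\<Sum>j<length bs. dot n v (bs!j) * dot n (bs!j) (bs!k))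
      = (\<Sum>j<length bs. if j = k then dot n v (bs!j) else 0)"
    using assms k unfolding orthonormal_def by (intro sum.cong) auto
  then show "dot n (residual n bs v) (bs!k) = 0"
    using k by (simp add: dot_residual)
qed

lemma dot_in_span:
  assumes "in_span n bs v"
  shows "dot n v u = (\<Sum>j<length bs. dot n v (bs!j) * dot n (bs!j) u)"
proof -
  have "dot n v u = dot n (\<lambda>i. \<Sum>j<length bs. dot n v (bs!j) * (bs!j) i) u"
    using assms unfolding in_span_def by (intro dot_cong) auto
  then show ?thesis by (simp add: dot_sum)
qed

lemma parseval:
  assumes "in_span n bs v"
  shows "dot n v v = (\<Sum>j<length bs. (dot n v (bs!j))^2)"
  unfolding dot_in_span[OF assms, of v] by (simp add: dot_commute power2_eq_square)

lemma dot_in_span_append: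
  assumes "orthonormal n (bs @ cs)" "in_span n bs v" "k < length cs"
  shows "dot n v (cs!k) = 0"
proof -
  have "dot n (bs!j) (cs!k) = 0" if "j < length bs" for j
    using assms(1)[unfolded orthonormal_def, rule_format, of j "length bs + k"] that assms(3)
    by (simp add: nth_append)
  then show ?thesis
    by (simp add: dot_in_span[OF assms(2), of "cs!k"])
qed

lemma in_span_append:
  assumes "orthonormal n (bs @ cs)" "in_span n bs v"
  shows "in_span n (bs @ cs) v"
  using assms(2) dot_in_span_append[OF assms]
  by (simp add: in_span_def sum_lessThan_add nth_append)

lemma in_span_lincomb:
  assumes "in_span n bs p" "in_span n bs q"
  shows "in_span n bs (\<lambda>i. a * p i + b * q i)"
  unfolding in_span_def
proof (intro allI impI)
  fix i assume "i < n"
  then have "a * p i + b * q i =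
      a * (\<Sum>j<length bs. dot n p (bs!j) * (bs!j) i) + b * (\<Sum>j<length bs. dot n q (bs!j) * (bs!j) i)"
    using assms unfolding in_span_def by simp
  also have "\<dots> = (\<Sum>j<length bs. dot n (\<lambda>i. a * p i + b * q i) (bs!j) * (bs!j) i)"
    by (simp add: dot_lincomb sum_distrib_left sum.distrib algebra_simps)
  finally show "a * p i + b * q i = (\<Sum>j<length bs. dot n (\<lambda>i. a * p i + b * q i) (bs!j) * (bs!j) i)" .
qed

lemma in_span_cong:
  assumes "in_span n bs p" "\<And>i. i < n \<Longrightarrow> q i = p i"
  shows "in_span n bs q"
  using assms unfolding in_span_def
  by (metis (no_types, lifting) dot_cong sum.cong)

lemma orthonormal_snoc:
  assumes "orthonormal n bs" "orthogonal_to n bs b" "dot n b b = 1"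
  shows "orthonormal n (bs @ [b])"
  unfolding orthonormal_def
proof (intro allI impI)
  fix j k assume "j < length (bs @ [b])" "k < length (bs @ [b])"
  then consider "j < length bs" "k < length bs" | "j < length bs" "k = length bs"
    | "j = length bs" "k < length bs" | "j = length bs" "k = length bs"
    by fastforce
  then show "dot n ((bs @ [b])!j) ((bs @ [b])!k) = (if j = k then 1 else 0)"
    using assms
    by cases (auto simp: orthonormal_def orthogonal_to_def nth_append dot_commute[of n "bs!j" b])
qed

text \<open>The last conjunct says that the new vectors lie in the span of \<open>bs\<close> and \<open>v\<close>.\<close>
lemma gram_schmidt_step:
  assumes on: "orthonormal n bs"
  shows "\<exists>cs. orthonormal n (bs @ cs) \<and> in_span n (bs @ cs) v \<and>
           (\<forall>z. dot n z v = 0 \<longrightarrow> orthogonal_to n bs z \<longrightarrow> orthogonal_to n (bs @ cs) z)"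
proof (cases "dot n (residual n bs v) (residual n bs v) = 0")
  case True
  then have "in_span n bs v"
    by (simp add: in_span_iff_residual dot_self_eq_0)
  then show ?thesis using on by (intro exI[of _ "[]"]) simp
next
  case False
  define r where "r = residual n bs v"
  define s where "s = sqrt (dot n r r)"
  define b where "b = (\<lambda>i. (1/s) * r i)"
  have s: "s > 0" "s * s = dot n r r"
    using False dot_self_nonneg[of n r] unfolding s_def r_def by auto
  have dot_r: "dot n r w = dot n v w - (\<Sum>j<length bs. dot n v (bs!j) * dot n (bs!j) w)" for w
    unfolding r_def by (rule dot_residual)
  have dot_b: "dot n b w = (1/s) * dot n r w" for w
    unfolding b_def by (rule dot_scale)
  have r_orth: "orthogonal_to n bs r"
    unfolding r_def by (rule orthogonal_to_residual[OF on])
  then have b_orth: "orthogonal_to n bs b"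
    by (simp add: orthogonal_to_def dot_b)
  have "dot n (bs!j) r = 0" if "j < length bs" for j
    using r_orth that by (simp add: orthogonal_to_def dot_commute[of n "bs!j" r])
  then have "dot n r r = dot n v r"
    using dot_r[of r] by simp
  then have "dot n v b = s"
    using s by (simp add: dot_commute[of n v b] dot_b dot_commute[of n r v] field_simps)
  then have "in_span n (bs @ [b]) v"
    using s(1) by (simp add: in_span_def nth_append b_def r_def residual_def)
  moreover have "dot n b b = 1"
    using s(1) by (simp add: dot_b dot_commute[of n r b] flip: s(2))
  then have on': "orthonormal n (bs @ [b])"
    by (rule orthonormal_snoc[OF on b_orth])
  moreover have "orthogonal_to n (bs @ [b]) z"
    if "dot n z v = 0" "orthogonal_to n bs z" for z
  proof -
    have "dot n (bs!j) z = 0" if "j < length bs" for j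
      using \<open>orthogonal_to n bs z\<close> that by (simp add: orthogonal_to_def dot_commute[of n "bs!j" z])
    then have "dot n r z = 0"
      using dot_r[of z] that(1) by (simp add: dot_commute[of n v z])
    then have "dot n z b = 0"
      by (simp add: dot_commute[of n z b] dot_b)
    then show ?thesis
      using that(2) by (auto simp: orthogonal_to_def nth_append less_Suc_eq)
  qed
  ultimately show ?thesis by blast
qed

lemma gram_schmidt:
  assumes "finite V" "orthonormal n bs"
  shows "\<exists>cs. orthonormal n (bs @ cs) \<and> (\<forall>v\<in>V. in_span n (bs @ cs) v) \<and>
           (\<forall>z. (\<forall>v\<in>V. dot n z v = 0) \<longrightarrow> orthogonal_to n bs z \<longrightarrow> orthogonal_to n (bs @ cs) z)"
  using assms(1)
proof (induction V)
  case empty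
  show ?case using assms(2) by (intro exI[of _ "[]"]) simp
next
  case (insert v V)
  then obtain cs1 where cs1: "orthonormal n (bs @ cs1)" "\<forall>w\<in>V. in_span n (bs @ cs1) w"
    "\<forall>z. (\<forall>w\<in>V. dot n z w = 0) \<longrightarrow> orthogonal_to n bs z \<longrightarrow> orthogonal_to n (bs @ cs1) z"
    by blast
  obtain cs2 where cs2: "orthonormal n (bs @ cs1 @ cs2)" "in_span n (bs @ cs1 @ cs2) v"
    "\<forall>z. dot n z v = 0 \<longrightarrow> orthogonal_to n (bs @ cs1) z \<longrightarrow> orthogonal_to n (bs @ cs1 @ cs2) z"
    using gram_schmidt_step[OF cs1(1), of v] by auto
  have "in_span n (bs @ cs1 @ cs2) w" if "w \<in> V" for w
    using in_span_append[of n "bs @ cs1" cs2] cs1(2) cs2(1) that by simp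
  then show ?case
    using cs1(3) cs2 by (intro exI[of _ "cs1 @ cs2"]) auto
qed

lemma orthonormal_length_le:
  assumes "orthonormal n bs"
  shows "length bs \<le> n"
proof -
  define e where "e k = (\<lambda>i. if i = k then 1 else 0 :: real)" for k :: nat
  obtain cs where on: "orthonormal n (bs @ cs)" and span: "\<forall>k<n. in_span n (bs @ cs) (e k)"
    using gram_schmidt[of "e ` {..<n}" n bs] assms by auto
  define bb where "bb = bs @ cs"
  have dot_e: "dot n (e k) w = w k" if "k < n" for k w
  proof -
    have "dot n (e k) w = (\<Sum>i<n. if i = k then w i else 0)"
      unfolding dot_def e_def by (intro sum.cong) auto
    then show ?thesis using that by simp
  qed
  have "real n = (\<Sum>k<n. dot n (e k) (e k))"
    by (simp add: dot_e) (simp add: e_def)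
  also have "\<dots> = (\<Sum>k<n. \<Sum>j<length bb. ((bb!j) k)^2)"
  proof (intro sum.cong refl)
    fix k assume "k \<in> {..<n}"
    then show "dot n (e k) (e k) = (\<Sum>j<length bb. ((bb!j) k)^2)"
      using parseval[of n bb "e k"] span by (simp add: dot_e bb_def)
  qed
  also have "\<dots> = (\<Sum>j<length bb. dot n (bb!j) (bb!j))"
    by (subst sum.swap) (simp add: dot_def power2_eq_square)
  also have "\<dots> = real (length bb)"
    using on unfolding bb_def orthonormal_def by simp
  finally show ?thesis unfolding bb_def by simp
qed

definition coords :: "nat \<Rightarrow> (nat \<Rightarrow> real) list \<Rightarrow> (nat \<Rightarrow> real) \<Rightarrow> nat \<Rightarrow> real" where
  "coords n bs p = (\<lambda>j. if j < length bs then dot n p (bs!j) else 0)"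

lemma coords_in_Rn: "length bs \<le> m \<Longrightarrow> coords n bs p \<in> Rn m"
  unfolding coords_def Rn_def by auto

lemma coords_lincomb:
  "coords n bs (\<lambda>i. a * p i + b * q i) = (\<lambda>j. a * coords n bs p j + b * coords n bs q j)"
  unfolding coords_def by (auto simp: dot_lincomb)

lemma edist_sq: "(edist n x y)^2 = (\<Sum>i<n. (x i - y i)^2)"
  using sum_nonneg[of "{..<n}" "\<lambda>i. (x i - y i)^2"] by (simp add: edist_def)

lemma edist_nonneg: "edist n x y \<ge> 0"
  unfolding edist_def by (intro real_sqrt_ge_zero sum_nonneg) simp

lemma edist_commute: "edist n x y = edist n y x"
  unfolding edist_def by (simp add: power2_commute)

lemma edist_self: "edist n x x = 0"
  unfolding edist_def by simp

lemma edist_eq_0_Rn: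
  assumes "x \<in> Rn n" "y \<in> Rn n" "edist n x y = 0"
  shows "x = y"
proof
  fix i
  have "(\<Sum>i<n. (x i - y i)^2) = 0"
    using edist_sq[of n x y] assms(3) by simp
  then show "x i = y i"
    using assms(1,2) by (cases "i < n") (auto simp: sum_nonneg_eq_0_iff Rn_def)
qed

lemma edist_Rn_mono:
  assumes "x \<in> Rn k" "y \<in> Rn k" "k \<le> m"
  shows "edist m x y = edist k x y"
proof -
  have "(\<Sum>i<k + (m - k). (x i - y i)^2) = (\<Sum>i<k. (x i - y i)^2)"
    using assms(1,2) by (simp add: sum_lessThan_add Rn_def)
  then show ?thesis
    using assms(3) by (simp add: edist_def)
qed

lemma edist_coords:
  assumes "in_span n bs (\<lambda>i. p i - q i)"
  shows "edist n p q = edist (length bs) (coords n bs p) (coords n bs q)"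
proof -
  have "(\<Sum>i<n. (p i - q i)^2) = dot n (\<lambda>i. p i - q i) (\<lambda>i. p i - q i)"
    by (simp add: dot_def power2_eq_square)
  also have "\<dots> = (\<Sum>j<length bs. (coords n bs p j - coords n bs q j)^2)"
    by (simp only: parseval[OF assms]) (simp add: dot_diff coords_def)
  finally show ?thesis by (simp add: edist_def)
qed

lemma edist_sq_coords_append:
  assumes "in_span n (bs @ cs) (\<lambda>i. p i - q i)"
  shows "(edist n p q)^2 =
    (edist (length bs) (coords n bs p) (coords n bs q))^2 +
    (edist (length cs) (coords n cs p) (coords n cs q))^2"
  unfolding edist_coords[OF assms] edist_sq
  by (simp add: sum_lessThan_add coords_def nth_append)

text \<open>For orthonormal \<open>bb\<close> extending \<open>bs\<close>: the affine subspace through \<open>z0\<close> in direction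
  \<open>span bb \<inter> bs\<^sup>\<bottom>\<close>.\<close>
definition slice ::
  "nat \<Rightarrow> (nat \<Rightarrow> real) list \<Rightarrow> (nat \<Rightarrow> real) list \<Rightarrow> (nat \<Rightarrow> real) \<Rightarrow> (nat \<Rightarrow> real) set" where
  "slice n bb bs z0 = {z \<in> Rn n. in_span n bb (\<lambda>i. z i - z0 i) \<and> coords n bs z = coords n bs z0}"

lemma slice_subset_Rn: "slice n bb bs z0 \<subseteq> Rn n"
  unfolding slice_def by blast

lemma in_span_diff_slice:
  assumes "p \<in> slice n bb bs z0" "q \<in> slice n bb bs z0"
  shows "in_span n bb (\<lambda>i. p i - q i)"
proof -
  have "in_span n bb (\<lambda>i. 1 * (p i - z0 i) + (-1) * (q i - z0 i))"
    using assms by (intro in_span_lincomb) (auto simp: slice_def)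
  then show ?thesis by (rule in_span_cong) simp
qed

lemma lincomb_in_slice:
  assumes "p \<in> slice n bb bs z0" "q \<in> slice n bb bs z0"
  shows "(\<lambda>i. (1 - t) * p i + t * q i) \<in> slice n bb bs z0"
proof -
  have "in_span n bb (\<lambda>i. (1 - t) * (p i - z0 i) + t * (q i - z0 i))"
    using assms by (intro in_span_lincomb) (auto simp: slice_def)
  then have "in_span n bb (\<lambda>i. ((1 - t) * p i + t * q i) - z0 i)"
    by (rule in_span_cong) (simp add: algebra_simps)
  moreover have "coords n bs (\<lambda>i. (1 - t) * p i + t * q i) = coords n bs z0"
    using assms unfolding coords_lincomb slice_def by (simp add: algebra_simps)
  ultimately show ?thesis
    using assms by (auto simp: slice_def Rn_def)
qed

lemma edist_slice_left:
  assumes "p \<in> slice n (bs @ cs) bs z0" "q \<in> slice n (bs @ cs) bs z0"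
  shows "edist n p q = edist (length cs) (coords n cs p) (coords n cs q)"
proof -
  have "(edist n p q)^2 = (edist (length cs) (coords n cs p) (coords n cs q))^2"
    using edist_sq_coords_append[OF in_span_diff_slice[OF assms]] assms
    by (simp add: slice_def edist_self)
  then show ?thesis by (simp add: edist_nonneg power2_eq_iff_nonneg)
qed

lemma edist_slice_right:
  assumes "p \<in> slice n (bs @ cs) cs z0" "q \<in> slice n (bs @ cs) cs z0"
  shows "edist n p q = edist (length bs) (coords n bs p) (coords n bs q)"
proof -
  have "(edist n p q)^2 = (edist (length bs) (coords n bs p) (coords n bs q))^2"
    using edist_sq_coords_append[OF in_span_diff_slice[OF assms]] assms
    by (simp add: slice_def edist_self)
  then show ?thesis by (simp add: edist_nonneg power2_eq_iff_nonneg)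
qed

section \<open>Affine isometries and joins of embeddings\<close>

lemma edist_translate: "edist n (\<lambda>i. x i - c i) (\<lambda>i. y i - c i) = edist n x y"
  unfolding edist_def by simp

lemma translate_in_Rn: "x \<in> Rn n \<Longrightarrow> c \<in> Rn n \<Longrightarrow> (\<lambda>i. x i - c i) \<in> Rn n"
  unfolding Rn_def by simp

lemma Rn_mono: "k \<le> m \<Longrightarrow> Rn k \<subseteq> Rn m"
  unfolding Rn_def by auto

definition Rn_perp :: "nat \<Rightarrow> (nat \<Rightarrow> real) set" where
  "Rn_perp k = {x. \<forall>i<k. x i = 0}"

lemma Rn_Int_Rn_perp:
  assumes "x \<in> Rn k" "x \<in> Rn_perp k"
  shows "x = (\<lambda>_. 0)"
proof
  fix i show "x i = 0"
    using assms by (cases "i < k") (auto simp: Rn_def Rn_perp_def)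
qed

lemma seg_commute: "seg p q = seg q p"
proof -
  have "seg p q \<subseteq> seg q p" for p q
  proof
    fix w assume "w \<in> seg p q"
    then obtain t where "0 \<le> t" "t \<le> 1" "w = (\<lambda>i. (1 - t) * p i + t * q i)"
      unfolding seg_def by auto
    then show "w \<in> seg q p"
      unfolding seg_def by (intro CollectI exI[of _ "1 - t"]) auto
  qed
  then show ?thesis by blast
qed

lemma seg_subset_Rn: "p \<in> Rn k \<Longrightarrow> q \<in> Rn k \<Longrightarrow> seg p q \<subseteq> Rn k"
  unfolding seg_def Rn_def by auto

lemma seg_subset_Rn_perp: "p \<in> Rn_perp k \<Longrightarrow> q \<in> Rn_perp k \<Longrightarrow> seg p q \<subseteq> Rn_perp k"
  unfolding seg_def Rn_perp_def by auto

lemma seg_Rn_Rn_perp: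
  assumes p: "p \<in> Rn k" "p \<noteq> (\<lambda>_. 0)" and q: "q \<in> Rn_perp k" "q \<noteq> (\<lambda>_. 0)"
    and w: "w \<in> seg p q"
  shows "w \<in> Rn k \<Longrightarrow> w = p" and "w \<in> Rn_perp k \<Longrightarrow> w = q"
proof -
  obtain t where t: "0 \<le> t" "t \<le> 1" "w = (\<lambda>i. (1 - t) * p i + t * q i)"
    using w unfolding seg_def by auto
  obtain i where i: "q i \<noteq> 0"
    using q(2) by (auto simp: fun_eq_iff)
  then have "k \<le> i"
    using q(1) unfolding Rn_perp_def by (cases "i < k") auto
  obtain j where j: "p j \<noteq> 0"
    using p(2) by (auto simp: fun_eq_iff)
  then have "j < k"
    using p(1) unfolding Rn_def by (cases "j < k") auto
  show "w = p" if "w \<in> Rn k"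
  proof -
    have "t * q i = 0" using that p(1) \<open>k \<le> i\<close> t(3) unfolding Rn_def by simp
    then show ?thesis using i(1) t(3) by simp
  qed
  show "w = q" if "w \<in> Rn_perp k"
  proof -
    have "(1 - t) * p j = 0" using that q(1) \<open>j < k\<close> t(3) unfolding Rn_perp_def by simp
    then show ?thesis using j(1) t(3) by simp
  qed
qed

lemma unit_distance_embedding_isometry_comp:
  assumes emb: "unit_distance_embedding n V E f" and graph: "simple_graph V E"
    and f_S: "f ` V \<subseteq> S" and S_Rn: "S \<subseteq> Rn n" and T_Rn: "T ` S \<subseteq> Rn m"
    and convex: "\<And>p q t. p \<in> S \<Longrightarrow> q \<in> S \<Longrightarrow> 0 \<le> t \<Longrightarrow> t \<le> 1 \<Longrightarrow>
      (\<lambda>i. (1 - t) * p i + t * q i) \<in> S"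
    and affine: "\<And>p q t. p \<in> S \<Longrightarrow> q \<in> S \<Longrightarrow> 0 \<le> t \<Longrightarrow> t \<le> 1 \<Longrightarrow>
      T (\<lambda>i. (1 - t) * p i + t * q i) = (\<lambda>i. (1 - t) * T p i + t * T q i)"
    and isometric: "\<And>p q. p \<in> S \<Longrightarrow> q \<in> S \<Longrightarrow> edist m (T p) (T q) = edist n p q"
  shows "unit_distance_embedding m V E (T \<circ> f)"
proof -
  have fS: "f v \<in> S" if "v \<in> V" for v
    using f_S that by blast
  have T_inj: "p = q" if "p \<in> S" "q \<in> S" "T p = T q" for p q
    using isometric[OF that(1,2)] that S_Rn by (metis edist_self edist_eq_0_Rn subsetD)
  have edge_V: "u \<in> V" "v \<in> V" if "E u v" for u v
    using graph that unfolding simple_graph_def by auto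
  show ?thesis
    unfolding unit_distance_embedding_def
  proof (intro conjI allI impI ballI)
    show "(T \<circ> f) v \<in> Rn m" if "v \<in> V" for v
      using T_Rn fS[OF that] by auto
    show "inj_on (T \<circ> f) V"
    proof (rule inj_onI)
      fix x y assume xy: "x \<in> V" "y \<in> V" "(T \<circ> f) x = (T \<circ> f) y"
      then have "f x = f y"
        using T_inj fS by simp
      then show "x = y"
        using emb xy(1,2) unfolding unit_distance_embedding_def by (auto dest: inj_onD)
    qed
  next
    fix u v assume "E u v"
    then show "edist m ((T \<circ> f) u) ((T \<circ> f) v) = 1"
      using emb isometric fS edge_V unfolding unit_distance_embedding_def by simp
  next
    fix u v w assume "E u v \<and> w \<in> V \<and> w \<noteq> u \<and> w \<noteq> v"
    then have uvw: "E u v" "w \<in> V" "w \<noteq> u" "w \<noteq> v" by auto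
    show "(T \<circ> f) w \<notin> seg ((T \<circ> f) u) ((T \<circ> f) v)"
    proof
      assume "(T \<circ> f) w \<in> seg ((T \<circ> f) u) ((T \<circ> f) v)"
      then obtain t where t: "0 \<le> t" "t \<le> 1"
        and Tw: "T (f w) = (\<lambda>i. (1 - t) * T (f u) i + t * T (f v) i)"
        unfolding seg_def by auto
      define z where "z = (\<lambda>i. (1 - t) * f u i + t * f v i)"
      have z: "z \<in> S"
        unfolding z_def using convex fS edge_V[OF uvw(1)] t by blast
      have "T (f w) = T z"
        unfolding Tw z_def using affine fS edge_V[OF uvw(1)] t by simp
      then have "f w = z"
        using T_inj fS[OF uvw(2)] z by blast
      then have "f w \<in> seg (f u) (f v)"
        unfolding seg_def z_def using t by auto
      then show False
        using emb uvw unfolding unit_distance_embedding_def by blast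
    qed
  qed
qed

lemma Rn_perp_notin_seg_Rn:
  "p \<in> Rn k \<Longrightarrow> q \<in> Rn k \<Longrightarrow> w \<in> Rn_perp k \<Longrightarrow> w \<noteq> (\<lambda>_. 0) \<Longrightarrow> w \<notin> seg p q"
  using seg_subset_Rn Rn_Int_Rn_perp by blast

lemma Rn_notin_seg_Rn_perp:
  "p \<in> Rn_perp k \<Longrightarrow> q \<in> Rn_perp k \<Longrightarrow> w \<in> Rn k \<Longrightarrow> w \<noteq> (\<lambda>_. 0) \<Longrightarrow> w \<notin> seg p q"
  using seg_subset_Rn_perp Rn_Int_Rn_perp by blast

lemma unit_distance_embedding_gsum:
  assumes G: "simple_graph VG EG" "unit_distance_embedding m VG EG F"
    and H: "simple_graph VH EH" "unit_distance_embedding m VH EH K"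
    and F_Rn: "\<And>a. a \<in> VG \<Longrightarrow> F a \<in> Rn k" and F_ne: "\<And>a. a \<in> VG \<Longrightarrow> F a \<noteq> (\<lambda>_. 0)"
    and K_Rn_perp: "\<And>b. b \<in> VH \<Longrightarrow> K b \<in> Rn_perp k" and K_ne: "\<And>b. b \<in> VH \<Longrightarrow> K b \<noteq> (\<lambda>_. 0)"
    and cross: "\<And>a b. a \<in> VG \<Longrightarrow> b \<in> VH \<Longrightarrow> edist m (F a) (K b) = 1"
  shows "unit_distance_embedding m (gsum_V VG VH) (gsum_E VG VH EG EH) (case_sum F K)"
proof -
  have F: "inj_on F VG" "\<And>u v. EG u v \<Longrightarrow> edist m (F u) (F v) = 1"
    "\<And>u v w. EG u v \<Longrightarrow> w \<in> VG \<Longrightarrow> w \<noteq> u \<Longrightarrow> w \<noteq> v \<Longrightarrow> F w \<notin> seg (F u) (F v)"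
    using G(2) unfolding unit_distance_embedding_def by blast+
  have K: "inj_on K VH" "\<And>u v. EH u v \<Longrightarrow> edist m (K u) (K v) = 1"
    "\<And>u v w. EH u v \<Longrightarrow> w \<in> VH \<Longrightarrow> w \<noteq> u \<Longrightarrow> w \<noteq> v \<Longrightarrow> K w \<notin> seg (K u) (K v)"
    using H(2) unfolding unit_distance_embedding_def by blast+
  have EG_V: "u \<in> VG \<and> v \<in> VG" if "EG u v" for u v
    using G(1) that unfolding simple_graph_def by auto
  have EH_V: "u \<in> VH \<and> v \<in> VH" if "EH u v" for u v
    using H(1) that unfolding simple_graph_def by auto
  have FK_ne: "F a \<noteq> K b" "K b \<noteq> F a" if "a \<in> VG" "b \<in> VH" for a b
    using Rn_Int_Rn_perp[of "F a" k] F_Rn[OF that(1)] F_ne[OF that(1)] K_Rn_perp[OF that(2)]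
    by metis+
  have seg_GG: "case_sum F K w \<notin> seg (F u) (F v)"
    if "EG u v" "w \<in> gsum_V VG VH" "w \<noteq> Inl u" "w \<noteq> Inl v" for u v w
  proof (cases w)
    case (Inr b)
    with that EG_V have "b \<in> VH" "u \<in> VG" "v \<in> VG" by (auto simp: gsum_V_def)
    with Inr show ?thesis by (simp add: Rn_perp_notin_seg_Rn[OF F_Rn F_Rn K_Rn_perp K_ne])
  qed (use that F(3) in \<open>auto simp: gsum_V_def\<close>)
  have seg_HH: "case_sum F K w \<notin> seg (K u) (K v)"
    if "EH u v" "w \<in> gsum_V VG VH" "w \<noteq> Inr u" "w \<noteq> Inr v" for u v w
  proof (cases w)
    case (Inl a)
    with that EH_V have "a \<in> VG" "u \<in> VH" "v \<in> VH" by (auto simp: gsum_V_def)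
    with Inl show ?thesis by (simp add: Rn_notin_seg_Rn_perp[OF K_Rn_perp K_Rn_perp F_Rn F_ne])
  qed (use that K(3) in \<open>auto simp: gsum_V_def\<close>)
  have seg_GH: "case_sum F K w \<notin> seg (F a) (K b)"
    if "a \<in> VG" "b \<in> VH" "w \<in> gsum_V VG VH" "w \<noteq> Inl a" "w \<noteq> Inr b" for a b w
  proof
    assume "case_sum F K w \<in> seg (F a) (K b)"
    note ends = seg_Rn_Rn_perp[OF F_Rn F_ne K_Rn_perp K_ne this, OF that(1,1,2,2)]
    show False
      using that ends F_Rn K_Rn_perp F(1) K(1) by (cases w) (auto simp: gsum_V_def dest: inj_onD)
  qed
  show ?thesis
    unfolding unit_distance_embedding_def
  proof (intro conjI allI impI ballI)
    show "case_sum F K v \<in> Rn m" if "v \<in> gsum_V VG VH" for v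
      using that G(2) H(2) unfolding unit_distance_embedding_def gsum_V_def by auto
    show "inj_on (case_sum F K) (gsum_V VG VH)"
    proof (rule inj_onI)
      fix x y assume "x \<in> gsum_V VG VH" "y \<in> gsum_V VG VH" "case_sum F K x = case_sum F K y"
      then show "x = y"
        using F(1) K(1) FK_ne by (cases x; cases y) (auto simp: gsum_V_def dest: inj_onD)
    qed
  next
    fix u v assume "gsum_E VG VH EG EH u v"
    then show "edist m (case_sum F K u) (case_sum F K v) = 1"
      using F(2) K(2) cross by (cases u; cases v) (auto simp: edist_commute)
  next
    fix u v w assume "gsum_E VG VH EG EH u v \<and> w \<in> gsum_V VG VH \<and> w \<noteq> u \<and> w \<noteq> v"
    then show "case_sum F K w \<notin> seg (case_sum F K u) (case_sum F K v)"
      using seg_GG seg_HH seg_GH by (cases u; cases v) (auto simp: seg_commute)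
  qed
qed

definition shift :: "nat \<Rightarrow> (nat \<Rightarrow> real) \<Rightarrow> nat \<Rightarrow> real" where
  "shift k x = (\<lambda>i. if i < k then 0 else x (i - k))"

lemma shift_in_Rn: "x \<in> Rn m \<Longrightarrow> shift k x \<in> Rn (k + m)"
  unfolding shift_def Rn_def by auto

lemma shift_in_Rn_perp: "shift k x \<in> Rn_perp k"
  unfolding shift_def Rn_perp_def by auto

lemma shift_eq_0: "shift k x = (\<lambda>_. 0) \<Longrightarrow> x = (\<lambda>_. 0)"
  unfolding shift_def by (rule ext) (metis add_diff_cancel_left' not_add_less1)

lemma shift_lincomb: "shift k (\<lambda>i. a * p i + b * q i) = (\<lambda>i. a * shift k p i + b * shift k q i)"
  unfolding shift_def by auto

lemma edist_shift: "edist (k + m) (shift k x) (shift k y) = edist m x y"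
  unfolding edist_def shift_def by (simp add: sum_lessThan_add)

lemma edist_sq_Rn_shift:
  assumes "x \<in> Rn k"
  shows "(edist (k + m) x (shift k y))^2 = (\<Sum>i<k. (x i)^2) + (\<Sum>i<m. (y i)^2)"
  using assms unfolding edist_sq shift_def Rn_def by (simp add: sum_lessThan_add)

lemma unit_distance_embedding_translate:
  assumes g: "unit_distance_embedding k V E g" "simple_graph V E" and c: "c \<in> Rn k" and "k \<le> m"
  shows "unit_distance_embedding m V E ((\<lambda>x i. x i - c i) \<circ> g)"
proof (rule unit_distance_embedding_isometry_comp[OF g, where S = "Rn k"])
  have translate: "(\<lambda>i. x i - c i) \<in> Rn k" if "x \<in> Rn k" for x
    using that c by (rule translate_in_Rn)
  show "g ` V \<subseteq> Rn k"
    using g(1) unfolding unit_distance_embedding_def by blast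
  show "(\<lambda>x i. x i - c i) ` Rn k \<subseteq> Rn m"
    using translate Rn_mono[OF \<open>k \<le> m\<close>] by auto
  show "edist m (\<lambda>i. p i - c i) (\<lambda>i. q i - c i) = edist k p q" if "p \<in> Rn k" "q \<in> Rn k" for p q
    using edist_Rn_mono[OF translate translate \<open>k \<le> m\<close>] that by (simp add: edist_translate)
qed (auto simp: Rn_def algebra_simps)

lemma unit_distance_embedding_shift:
  assumes h: "unit_distance_embedding m V E h" "simple_graph V E" and c: "c \<in> Rn m"
  shows "unit_distance_embedding (k + m) V E ((\<lambda>y. shift k (\<lambda>i. y i - c i)) \<circ> h)"
proof (rule unit_distance_embedding_isometry_comp[OF h, where S = "Rn m"])
  show "h ` V \<subseteq> Rn m"
    using h(1) unfolding unit_distance_embedding_def by blast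
  show "(\<lambda>y. shift k (\<lambda>i. y i - c i)) ` Rn m \<subseteq> Rn (k + m)"
    using c by (auto intro: shift_in_Rn translate_in_Rn)
  show "edist (k + m) (shift k (\<lambda>i. p i - c i)) (shift k (\<lambda>i. q i - c i)) = edist m p q" for p q
    by (simp add: edist_shift edist_translate)
  show "shift k (\<lambda>i. (1 - t) * p i + t * q i - c i) =
      (\<lambda>i. (1 - t) * shift k (\<lambda>i. p i - c i) i + t * shift k (\<lambda>i. q i - c i) i)" for p q t
    unfolding shift_lincomb[symmetric] by (simp add: algebra_simps)
qed (auto simp: Rn_def)

lemma sphere_center_ne:
  assumes "edist n x c = r" "r \<noteq> 0"
  shows "(\<lambda>i. x i - c i) \<noteq> (\<lambda>_. 0)"
proof
  assume "(\<lambda>i. x i - c i) = (\<lambda>_. 0)"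
  then have "x = c" by (simp add: fun_eq_iff)
  then show False using assms by (simp add: edist_self)
qed

lemma join_embedding_of_spherical_embeddings:
  assumes G: "simple_graph VG EG" and H: "simple_graph VH EH"
    and r: "0 < r1" "0 < r2" "r1^2 + r2^2 = 1"
    and "spherical_embedding n1 r1 VG EG" "spherical_embedding n2 r2 VH EH"
  shows "\<exists>f. unit_distance_embedding (n1 + n2) (gsum_V VG VH) (gsum_E VG VH EG EH) f"
proof -
  obtain g cg where g: "unit_distance_embedding n1 VG EG g" "cg \<in> Rn n1"
    and g_sphere: "\<And>a. a \<in> VG \<Longrightarrow> edist n1 (g a) cg = r1"
    using assms(6) unfolding spherical_embedding_def by blast
  obtain h ch where h: "unit_distance_embedding n2 VH EH h" "ch \<in> Rn n2"
    and h_sphere: "\<And>b. b \<in> VH \<Longrightarrow> edist n2 (h b) ch = r2"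
    using assms(7) unfolding spherical_embedding_def by blast
  define F where "F x = (\<lambda>i. x i - cg i)" for x
  define K where "K y = shift n1 (\<lambda>i. y i - ch i)" for y
  have F_Rn: "F (g a) \<in> Rn n1" if "a \<in> VG" for a
    using g that translate_in_Rn unfolding unit_distance_embedding_def F_def by blast
  have "unit_distance_embedding (n1 + n2) VG EG (F \<circ> g)"
    unfolding F_def by (rule unit_distance_embedding_translate[OF g(1) G g(2)]) simp
  moreover have "unit_distance_embedding (n1 + n2) VH EH (K \<circ> h)"
    unfolding K_def by (rule unit_distance_embedding_shift[OF h(1) H h(2)])
  moreover note F_Rn
  moreover have "F (g a) \<noteq> (\<lambda>_. 0)" if "a \<in> VG" for a
    using sphere_center_ne[OF g_sphere[OF that]] r(1) unfolding F_def by simp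
  moreover have "K (h b) \<in> Rn_perp n1" for b
    unfolding K_def by (rule shift_in_Rn_perp)
  moreover have "K (h b) \<noteq> (\<lambda>_. 0)" if "b \<in> VH" for b
    using sphere_center_ne[OF h_sphere[OF that]] r(2) unfolding K_def by (auto dest: shift_eq_0)
  moreover have "edist (n1 + n2) (F (g a)) (K (h b)) = 1" if "a \<in> VG" "b \<in> VH" for a b
  proof -
    have "(edist (n1 + n2) (F (g a)) (K (h b)))^2
        = (\<Sum>i<n1. (F (g a) i)^2) + (\<Sum>i<n2. (h b i - ch i)^2)"
      unfolding K_def using F_Rn[OF that(1)] by (rule edist_sq_Rn_shift)
    also have "\<dots> = (edist n1 (g a) cg)^2 + (edist n2 (h b) ch)^2"
      by (simp add: edist_sq F_def)
    finally have "(edist (n1 + n2) (F (g a)) (K (h b)))^2 = r1^2 + r2^2"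
      using g_sphere[OF that(1)] h_sphere[OF that(2)] by simp
    then show ?thesis
      using r(3) edist_nonneg[of "n1 + n2" "F (g a)" "K (h b)"] by (auto simp: power2_eq_1_iff)
  qed
  ultimately have "unit_distance_embedding (n1 + n2) (gsum_V VG VH) (gsum_E VG VH EG EH)
      (case_sum (F \<circ> g) (K \<circ> h))"
    by (intro unit_distance_embedding_gsum[OF G _ H]) auto
  then show ?thesis by blast
qed

section \<open>Splitting an embedding of a join\<close>

lemma unit_distance_embedding_comp:
  assumes f: "unit_distance_embedding n V E f" and h: "inj h" "h ` V' \<subseteq> V"
    and edges: "\<And>u v. E' u v \<Longrightarrow> E (h u) (h v)"
  shows "unit_distance_embedding n V' E' (f \<circ> h)"
  unfolding unit_distance_embedding_def
proof (intro conjI allI impI ballI)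
  show "(f \<circ> h) v \<in> Rn n" if "v \<in> V'" for v
    using f h(2) that unfolding unit_distance_embedding_def by auto
  show "inj_on (f \<circ> h) V'"
  proof (rule comp_inj_on)
    show "inj_on h V'"
      using h(1) by (rule inj_on_subset) simp
    show "inj_on f (h ` V')"
      using f h(2) unfolding unit_distance_embedding_def by (blast intro: inj_on_subset)
  qed
next
  fix u v assume "E' u v"
  then show "edist n ((f \<circ> h) u) ((f \<circ> h) v) = 1"
    using f edges unfolding unit_distance_embedding_def by simp
next
  fix u v w assume uvw: "E' u v \<and> w \<in> V' \<and> w \<noteq> u \<and> w \<noteq> v"
  then have "E (h u) (h v)" "h w \<in> V" "h w \<noteq> h u" "h w \<noteq> h v"
    using edges h by (auto dest: injD)
  then show "(f \<circ> h) w \<notin> seg ((f \<circ> h) u) ((f \<circ> h) v)"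
    using f unfolding unit_distance_embedding_def by simp
qed

lemma orthogonal_of_unit_distances:
  assumes "edist n x y = 1" "edist n x y0 = 1" "edist n x0 y = 1" "edist n x0 y0 = 1"
  shows "dot n (\<lambda>i. x i - x0 i) (\<lambda>i. y i - y0 i) = 0"
proof -
  \<comment> \<open>polarisation: \<open>2\<langle>x - x0, y - y0\<rangle> = |x - y0|\<^sup>2 + |x0 - y|\<^sup>2 - |x - y|\<^sup>2 - |x0 - y0|\<^sup>2\<close>\<close>
  have "dot n (\<lambda>i. x i - x0 i) (\<lambda>i. y i - y0 i)
      = (\<Sum>i<n. ((x i - y0 i)^2 + (x0 i - y i)^2 - (x i - y i)^2 - (x0 i - y0 i)^2) / 2)"
    unfolding dot_def by (intro sum.cong refl) (simp add: power2_eq_square field_simps)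
  also have "\<dots> = ((edist n x y0)^2 + (edist n x0 y)^2 - (edist n x y)^2 - (edist n x0 y0)^2) / 2"
    by (simp add: edist_sq sum_divide_distrib[symmetric] sum.distrib sum_subtractf)
  finally show ?thesis
    using assms by simp
qed

lemma orthonormal_frame:
  assumes "finite A" "finite B"
  obtains bs cs where "orthonormal n (bs @ cs)"
    "\<And>w. w \<in> B \<Longrightarrow> in_span n bs w" "\<And>v. v \<in> A \<Longrightarrow> in_span n (bs @ cs) v"
    "\<And>z. (\<And>w. w \<in> B \<Longrightarrow> dot n z w = 0) \<Longrightarrow> orthogonal_to n bs z"
proof -
  obtain bs where bs: "orthonormal n bs" "\<forall>w\<in>B. in_span n bs w"
    "\<forall>z. (\<forall>w\<in>B. dot n z w = 0) \<longrightarrow> orthogonal_to n bs z"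
    using gram_schmidt[OF assms(2), of n "[]"] by (auto simp: orthonormal_def orthogonal_to_def)
  obtain cs where "orthonormal n (bs @ cs)" "\<forall>v\<in>A. in_span n (bs @ cs) v"
    using gram_schmidt[OF assms(1) bs(1)] by blast
  then show ?thesis
    using that bs(2,3) by blast
qed

lemma unit_cross_distances_frame:
  assumes fin: "finite VG" "finite VH" and base: "a0 \<in> VG" "b0 \<in> VH"
    and X_Rn: "\<And>a. a \<in> VG \<Longrightarrow> X a \<in> Rn n" and Y_Rn: "\<And>b. b \<in> VH \<Longrightarrow> Y b \<in> Rn n"
    and unit: "\<And>a b. a \<in> VG \<Longrightarrow> b \<in> VH \<Longrightarrow> edist n (X a) (Y b) = 1"
  obtains bs cs where "orthonormal n (bs @ cs)"
    "\<And>a. a \<in> VG \<Longrightarrow> X a \<in> slice n (bs @ cs) bs (X a0)"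
    "\<And>b. b \<in> VH \<Longrightarrow> Y b \<in> slice n (bs @ cs) cs (Y b0)"
    "in_span n (bs @ cs) (\<lambda>i. X a0 i - Y b0 i)"
proof -
  define A where "A = (\<lambda>a i. X a i - X a0 i) ` VG \<union> {\<lambda>i. X a0 i - Y b0 i}"
  define B where "B = (\<lambda>b i. Y b i - Y b0 i) ` VH"
  obtain bs cs where on: "orthonormal n (bs @ cs)" and B_span: "\<And>w. w \<in> B \<Longrightarrow> in_span n bs w"
    and A_span: "\<And>v. v \<in> A \<Longrightarrow> in_span n (bs @ cs) v"
    and orth: "\<And>z. (\<And>w. w \<in> B \<Longrightarrow> dot n z w = 0) \<Longrightarrow> orthogonal_to n bs z"
    using orthonormal_frame[of A B n] fin unfolding A_def B_def by blast
  have "X a \<in> slice n (bs @ cs) bs (X a0)" if "a \<in> VG" for a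
  proof -
    have "orthogonal_to n bs (\<lambda>i. X a i - X a0 i)"
      using orthogonal_of_unit_distances unit that base by (intro orth) (auto simp: B_def)
    then show ?thesis
      using that X_Rn A_span by (auto simp: slice_def A_def coords_def orthogonal_to_def dot_diff)
  qed
  moreover have "Y b \<in> slice n (bs @ cs) cs (Y b0)" if "b \<in> VH" for b
  proof -
    have span: "in_span n bs (\<lambda>i. Y b i - Y b0 i)"
      using that by (intro B_span) (simp add: B_def)
    have "coords n cs (Y b) = coords n cs (Y b0)"
      using dot_in_span_append[OF on span] by (auto simp: coords_def dot_diff fun_eq_iff)
    then show ?thesis
      using that Y_Rn in_span_append[OF on span] by (simp add: slice_def)
  qed
  ultimately show ?thesis
    using that on A_span by (auto simp: A_def)
qed

lemma edist_sq_cross_slices: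
  assumes p: "p \<in> slice n (bs @ cs) bs x0" and q: "q \<in> slice n (bs @ cs) cs y0"
    and x0y0: "in_span n (bs @ cs) (\<lambda>i. x0 i - y0 i)"
  shows "(edist n p q)^2 =
    (edist (length cs) (coords n cs p) (coords n cs y0))^2 +
    (edist (length bs) (coords n bs q) (coords n bs x0))^2"
proof -
  have "in_span n (bs @ cs) (\<lambda>i. 1 * (p i - x0 i) + 1 * (x0 i - y0 i))"
    using p x0y0 by (intro in_span_lincomb) (auto simp: slice_def)
  then have "in_span n (bs @ cs) (\<lambda>i. 1 * (p i - y0 i) + (- 1) * (q i - y0 i))"
    using q by (intro in_span_lincomb) (auto simp: slice_def elim: in_span_cong)
  then have "in_span n (bs @ cs) (\<lambda>i. p i - q i)"
    by (rule in_span_cong) simp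
  then show ?thesis
    using p q by (simp add: edist_sq_coords_append slice_def edist_commute add.commute)
qed

lemma unit_distance_embedding_coords_slice:
  assumes "unit_distance_embedding n V E f" "simple_graph V E"
    and "f ` V \<subseteq> slice n (bs @ cs) bs z0" "length cs \<le> m"
  shows "unit_distance_embedding m V E (coords n cs \<circ> f)"
proof (rule unit_distance_embedding_isometry_comp[OF assms(1-3)])
  show "edist m (coords n cs p) (coords n cs q) = edist n p q"
    if "p \<in> slice n (bs @ cs) bs z0" "q \<in> slice n (bs @ cs) bs z0" for p q
    using edist_Rn_mono[OF coords_in_Rn coords_in_Rn assms(4)] edist_slice_left[OF that] by simp
qed (use slice_subset_Rn in \<open>auto simp: lincomb_in_slice coords_in_Rn assms(4) coords_lincomb\<close>)

lemma unit_distance_embedding_coords_slice':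
  assumes "unit_distance_embedding n V E f" "simple_graph V E"
    and "f ` V \<subseteq> slice n (bs @ cs) cs z0" "length bs \<le> m"
  shows "unit_distance_embedding m V E (coords n bs \<circ> f)"
proof (rule unit_distance_embedding_isometry_comp[OF assms(1-3)])
  show "edist m (coords n bs p) (coords n bs q) = edist n p q"
    if "p \<in> slice n (bs @ cs) cs z0" "q \<in> slice n (bs @ cs) cs z0" for p q
    using edist_Rn_mono[OF coords_in_Rn coords_in_Rn assms(4)] edist_slice_right[OF that] by simp
qed (use slice_subset_Rn in \<open>auto simp: lincomb_in_slice coords_in_Rn assms(4) coords_lincomb\<close>)

lemma card_ge_2_obtains:
  assumes "card A \<ge> 2"
  obtains a b where "a \<in> A" "b \<in> A" "a \<noteq> b"
proof -
  have "finite A"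
    using assms card.infinite by fastforce
  then show ?thesis
    using assms that card_le_Suc0_iff_eq[of A] by fastforce
qed

lemma sphere_radius_pos:
  assumes "x \<in> Rn k" "y \<in> Rn k" "c \<in> Rn k" "x \<noteq> y" "edist k x c = r" "edist k y c = r"
  shows "0 < r"
proof -
  have "r \<noteq> 0"
    using assms edist_eq_0_Rn by metis
  then show ?thesis
    using assms(5) edist_nonneg[of k x c] by simp
qed

lemma spherical_embeddings_of_pythagoras:
  assumes G: "unit_distance_embedding n1 VG EG \<phi>" "card VG \<ge> 2" "c \<in> Rn n1"
    and H: "unit_distance_embedding n2 VH EH \<psi>" "card VH \<ge> 2" "d \<in> Rn n2"
    and pyth: "\<And>a b. a \<in> VG \<Longrightarrow> b \<in> VH \<Longrightarrow> (edist n1 (\<phi> a) c)^2 + (edist n2 (\<psi> b) d)^2 = 1"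
  shows "\<exists>r1 r2. n1 \<ge> 1 \<and> n2 \<ge> 1 \<and> 0 < r1 \<and> r1 < 1 \<and> 0 < r2 \<and> r2 < 1 \<and> r1^2 + r2^2 = 1 \<and>
    spherical_embedding n1 r1 VG EG \<and> spherical_embedding n2 r2 VH EH"
proof -
  obtain a0 a1 where a: "a0 \<in> VG" "a1 \<in> VG" "a0 \<noteq> a1"
    using G(2) by (rule card_ge_2_obtains)
  obtain b0 b1 where b: "b0 \<in> VH" "b1 \<in> VH" "b0 \<noteq> b1"
    using H(2) by (rule card_ge_2_obtains)
  define r1 where "r1 = edist n1 (\<phi> a0) c"
  define r2 where "r2 = edist n2 (\<psi> b0) d"
  have r: "r1^2 + r2^2 = 1"
    unfolding r1_def r2_def using pyth a(1) b(1) .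
  have sphere1: "edist n1 (\<phi> a) c = r1" if "a \<in> VG" for a
  proof -
    have "(edist n1 (\<phi> a) c)^2 = r1^2"
      using pyth[OF that b(1)] r unfolding r2_def by linarith
    then show ?thesis
      by (simp add: r1_def power2_eq_iff_nonneg edist_nonneg)
  qed
  have sphere2: "edist n2 (\<psi> b) d = r2" if "b \<in> VH" for b
  proof -
    have "(edist n2 (\<psi> b) d)^2 = r2^2"
      using pyth[OF a(1) that] r unfolding r1_def by linarith
    then show ?thesis
      by (simp add: r2_def power2_eq_iff_nonneg edist_nonneg)
  qed
  have r1: "0 < r1"
    using G a sphere1 unfolding unit_distance_embedding_def
    by (intro sphere_radius_pos[of "\<phi> a0" n1 "\<phi> a1" c]) (auto dest: inj_onD)
  have r2: "0 < r2"
    using H b sphere2 unfolding unit_distance_embedding_def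
    by (intro sphere_radius_pos[of "\<psi> b0" n2 "\<psi> b1" d]) (auto dest: inj_onD)
  have "r1^2 < 1" "r2^2 < 1"
    using r zero_less_power[OF r1, of 2] zero_less_power[OF r2, of 2] by linarith+
  then have "r1 < 1" "r2 < 1"
    using r1 r2 by (auto simp: abs_square_less_1)
  moreover have "n1 \<ge> 1" "n2 \<ge> 1"
    using r1 r2 unfolding r1_def r2_def edist_def by (auto simp: Suc_le_eq intro!: gr0I)
  moreover have "spherical_embedding n1 r1 VG EG" "spherical_embedding n2 r2 VH EH"
    unfolding spherical_embedding_def using G H sphere1 sphere2 by blast+
  ultimately show ?thesis
    using r r1 r2 by blast
qed

lemma spherical_embeddings_of_join_embedding:
  assumes G: "simple_graph VG EG" "card VG \<ge> 2" and H: "simple_graph VH EH" "card VH \<ge> 2"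
    and f: "unit_distance_embedding n (gsum_V VG VH) (gsum_E VG VH EG EH) f"
  shows "\<exists>n1 n2 (r1::real) r2. n1 \<ge> 1 \<and> n2 \<ge> 1 \<and> n1 + n2 = n \<and>
    0 < r1 \<and> r1 < 1 \<and> 0 < r2 \<and> r2 < 1 \<and> r1^2 + r2^2 = 1 \<and>
    spherical_embedding n1 r1 VG EG \<and> spherical_embedding n2 r2 VH EH"
proof -
  have X: "unit_distance_embedding n VG EG (f \<circ> Inl)"
    using f by (rule unit_distance_embedding_comp) (auto simp: gsum_V_def)
  have Y: "unit_distance_embedding n VH EH (f \<circ> Inr)"
    using f by (rule unit_distance_embedding_comp) (auto simp: gsum_V_def)
  have unit: "edist n ((f \<circ> Inl) a) ((f \<circ> Inr) b) = 1" if "a \<in> VG" "b \<in> VH" for a b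
    using f that unfolding unit_distance_embedding_def by simp
  obtain a0 b0 where base: "a0 \<in> VG" "b0 \<in> VH"
    using G(2) H(2) card_ge_2_obtains by metis
  have fin: "finite VG" "finite VH"
    using G(1) H(1) unfolding simple_graph_def by auto
  have X_Rn: "(f \<circ> Inl) a \<in> Rn n" if "a \<in> VG" for a
    using X that unfolding unit_distance_embedding_def by blast
  have Y_Rn: "(f \<circ> Inr) b \<in> Rn n" if "b \<in> VH" for b
    using Y that unfolding unit_distance_embedding_def by blast
  obtain bs cs where on: "orthonormal n (bs @ cs)"
    and X_slice: "\<And>a. a \<in> VG \<Longrightarrow> (f \<circ> Inl) a \<in> slice n (bs @ cs) bs ((f \<circ> Inl) a0)"
    and Y_slice: "\<And>b. b \<in> VH \<Longrightarrow> (f \<circ> Inr) b \<in> slice n (bs @ cs) cs ((f \<circ> Inr) b0)"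
    and base_span: "in_span n (bs @ cs) (\<lambda>i. (f \<circ> Inl) a0 i - (f \<circ> Inr) b0 i)"
    using unit_cross_distances_frame[of VG VH a0 b0 "f \<circ> Inl" n "f \<circ> Inr", OF fin base X_Rn Y_Rn unit]
    by blast
  define n2 where "n2 = length bs"
  define c where "c = coords n cs ((f \<circ> Inr) b0)"
  define d where "d = coords n bs ((f \<circ> Inl) a0)"
  have len: "n2 + length cs \<le> n"
    using orthonormal_length_le[OF on] unfolding n2_def by simp
  have trunc: "edist (n - n2) (coords n cs p) (coords n cs q) =
      edist (length cs) (coords n cs p) (coords n cs q)" for p q
    using len by (intro edist_Rn_mono coords_in_Rn) auto
  have "unit_distance_embedding (n - n2) VG EG (coords n cs \<circ> (f \<circ> Inl))"
    using X_slice len by (intro unit_distance_embedding_coords_slice[OF X G(1)]) auto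
  moreover have "unit_distance_embedding n2 VH EH (coords n bs \<circ> (f \<circ> Inr))"
    using Y_slice by (intro unit_distance_embedding_coords_slice'[OF Y H(1)]) (auto simp: n2_def)
  moreover have "c \<in> Rn (n - n2)" "d \<in> Rn n2"
    using len unfolding c_def d_def n2_def by (auto intro: coords_in_Rn)
  moreover have "(edist (n - n2) ((coords n cs \<circ> (f \<circ> Inl)) a) c)^2 +
      (edist n2 ((coords n bs \<circ> (f \<circ> Inr)) b) d)^2 = 1"
    if "a \<in> VG" "b \<in> VH" for a b
    using edist_sq_cross_slices[OF X_slice[OF that(1)] Y_slice[OF that(2)] base_span] unit[OF that]
    unfolding c_def d_def by (simp add: trunc flip: n2_def)
  ultimately obtain r1 r2 where "n - n2 \<ge> 1 \<and> n2 \<ge> 1 \<and> 0 < r1 \<and> r1 < 1 \<and> 0 < r2 \<and> r2 < 1 \<and>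
      r1^2 + r2^2 = 1 \<and> spherical_embedding (n - n2) r1 VG EG \<and> spherical_embedding n2 r2 VH EH"
    using spherical_embeddings_of_pythagoras G(2) H(2) by metis
  then show ?thesis
    using len by (intro exI[of _ "n - n2"] exI[of _ n2]) auto
qed

theorem mainTheorem4:
  fixes VG :: "'a set" and EG :: "'a \<Rightarrow> 'a \<Rightarrow> bool"
    and VH :: "'b set" and EH :: "'b \<Rightarrow> 'b \<Rightarrow> bool"
  assumes "simple_graph VG EG" and "simple_graph VH EH"
    and "card VG \<ge> 2" and "card VH \<ge> 2"
  shows "(\<forall>n1 n2 (r1::real) r2.
            n1 \<ge> 1 \<and> n2 \<ge> 1 \<and> 0 < r1 \<and> r1 < 1 \<and> 0 < r2 \<and> r2 < 1 \<and> r1^2 + r2^2 = 1 \<and>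
            spherical_embedding n1 r1 VG EG \<and> spherical_embedding n2 r2 VH EH \<longrightarrow>
            (\<exists>f. unit_distance_embedding (n1 + n2) (gsum_V VG VH) (gsum_E VG VH EG EH) f))
       \<and> (\<forall>n. (\<exists>f. unit_distance_embedding n (gsum_V VG VH) (gsum_E VG VH EG EH) f) \<longrightarrow>
            (\<exists>n1 n2 (r1::real) r2. n1 \<ge> 1 \<and> n2 \<ge> 1 \<and> n1 + n2 = n \<and>
               0 < r1 \<and> r1 < 1 \<and> 0 < r2 \<and> r2 < 1 \<and> r1^2 + r2^2 = 1 \<and>
               spherical_embedding n1 r1 VG EG \<and> spherical_embedding n2 r2 VH EH))"
  using join_embedding_of_spherical_embeddings[OF assms(1,2)]
    spherical_embeddings_of_join_embedding[OF assms(1,3,2,4)]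
  by blast

end
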